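(* Let $G$ be a finite abelian group of even order and $S=\{s^{\pm1},t^{\pm1},u^{\pm1}\}$ a symmetric generating set. Suppose the $18$ elements $s^it^ju^k$ ($0\le i\le2$, $0\le j\le2$, $0\le k\le1$) are distinct, and let $Y$ be the set of them. Suppose either $G=Y$, or there is a hamiltonian cycle of the subgraph of $\mathrm{Cay}(G;S)$ induced by $G\setminus Y$ that contains the edge from $t^3$ to $t^3s$. Then $\mathcal H$ contains every basic $4$-cycle.
   Context: $\mathrm{Cay}(G;S)$ has vertex set $G$ and edges $\{g,gs\}$. $[v](t_1,\dots,t_n)$ denotes the walk $v,vt_1,\dots,vt_1\cdots t_n$; closed walks are identified with flows ($+1$ on traversed oriented edges, $-1$ on reversals). A basic $4$-cycle is a closed walk $[v](a,b,a^{-1},b^{-1})$ with $v\in G$, $a,b\in S$. A flow is $f:G\times S\to\mathbb Z$ with $f(v,a)=-f(va,a^{-1})$ and $\sum_af(v,a)=0$. $\mathcal H$ is the subgroup of flows generated by oriented hamiltonian cycles. *)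

theory Defs
  imports "HOL-Algebra.Algebra"
begin

definition walk_vert :: "('a, 'b) monoid_scheme \<Rightarrow> 'a \<Rightarrow> 'a list \<Rightarrow> nat \<Rightarrow> 'a" where
  "walk_vert G v ts i = foldl (\<lambda>x a. x \<otimes>\<^bsub>G\<^esub> a) v (take i ts)"

text \<open>The flow of the walk [v](t_1,...,t_n): +1 on each traversed oriented edge (w,a),
  -1 on its reversal (w a, a^{-1}); flows are functions G x S -> int (zero elsewhere).\<close>
definition walk_flow :: "('a, 'b) monoid_scheme \<Rightarrow> 'a \<Rightarrow> 'a list \<Rightarrow> 'a \<Rightarrow> 'a \<Rightarrow> int" where
  "walk_flow G v ts = (\<lambda>w a. \<Sum>i<length ts.
      (if w = walk_vert G v ts i \<and> a = ts ! i then 1 else 0)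
    - (if w = walk_vert G v ts (Suc i) \<and> a = inv\<^bsub>G\<^esub> (ts ! i) then 1 else 0))"

definition ham_cycle :: "('a, 'b) monoid_scheme \<Rightarrow> 'a set \<Rightarrow> 'a \<Rightarrow> 'a list \<Rightarrow> bool" where
  "ham_cycle G S v ts \<longleftrightarrow> v \<in> carrier G \<and> set ts \<subseteq> S \<and>
     length ts = card (carrier G) \<and> length ts \<ge> 3 \<and>
     walk_vert G v ts (length ts) = v \<and>
     distinct (map (walk_vert G v ts) [0..<length ts]) \<and>
     set (map (walk_vert G v ts) [0..<length ts]) = carrier G"

inductive_set ham_span :: "('a, 'b) monoid_scheme \<Rightarrow> 'a set \<Rightarrow> ('a \<Rightarrow> 'a \<Rightarrow> int) set"
  for G S where
    zero: "(\<lambda>_ _. 0) \<in> ham_span G S"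
  | ham: "ham_cycle G S v ts \<Longrightarrow> walk_flow G v ts \<in> ham_span G S"
  | diff: "f \<in> ham_span G S \<Longrightarrow> g \<in> ham_span G S \<Longrightarrow> (\<lambda>w a. f w a - g w a) \<in> ham_span G S"

definition cay_adj :: "('a, 'b) monoid_scheme \<Rightarrow> 'a set \<Rightarrow> 'a \<Rightarrow> 'a \<Rightarrow> bool" where
  "cay_adj G S x y \<longleftrightarrow> x \<in> carrier G \<and> (\<exists>a\<in>S. y = x \<otimes>\<^bsub>G\<^esub> a)"

definition induced_ham_cycle_with_edge ::
  "('a, 'b) monoid_scheme \<Rightarrow> 'a set \<Rightarrow> 'a set \<Rightarrow> 'a \<Rightarrow> 'a \<Rightarrow> bool" where
  "induced_ham_cycle_with_edge G S V x y \<longleftrightarrow>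
     (\<exists>vs. distinct vs \<and> set vs = V \<and> length vs \<ge> 3 \<and>
        (\<forall>i<length vs. cay_adj G S (vs ! i) (vs ! (Suc i mod length vs))) \<and>
        (\<exists>i<length vs. {vs ! i, vs ! (Suc i mod length vs)} = {x, y}))"

end

(* Every hamiltonian path of the 3 x 3 x 2 grid Y = {s^i t^j u^k} from t^2 to s t^2 closes up to
   a hamiltonian cycle of Cay(G;S) in one and the same way: by the edge s t^2 -- t^2 if G = Y,
   and otherwise by the edges s t^2 -- s t^3 and t^3 -- t^2 together with the hamiltonian path
   of G - Y obtained by deleting the edge t^3 -- t^3 s from the given cycle.  In an alternating
   sum of four such cycles the common closing part cancels, and for each pair of generators there
   are four grid paths whose alternating sum is a single basic 4-cycle.  Translating, and using
   how basic 4-cycles change when two generators are swapped or one is inverted, yields every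
   basic 4-cycle. *)

theory Submission
  imports Defs "HOL-Library.Function_Algebras"
begin

lemma ham_span_zero: "0 \<in> ham_span G S"
  using ham_span.zero by (simp add: zero_fun_def)

lemma ham_span_diff: "f \<in> ham_span G S \<Longrightarrow> g \<in> ham_span G S \<Longrightarrow> f - g \<in> ham_span G S"
  using ham_span.diff by (simp add: fun_diff_def)

lemma ham_span_uminus: "f \<in> ham_span G S \<Longrightarrow> - f \<in> ham_span G S"
  using ham_span_diff[OF ham_span_zero] by simp

lemma ham_span_add: "f \<in> ham_span G S \<Longrightarrow> g \<in> ham_span G S \<Longrightarrow> f + g \<in> ham_span G S"
  by (metis diff_minus_eq_add ham_span_diff ham_span_uminus)

definition arc_flow :: "('a, 'b) monoid_scheme \<Rightarrow> 'a \<Rightarrow> 'a \<Rightarrow> 'a \<Rightarrow> 'a \<Rightarrow> int" where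
  "arc_flow G x y = (\<lambda>w a. (if w = x \<and> a = inv\<^bsub>G\<^esub> x \<otimes>\<^bsub>G\<^esub> y then 1 else 0)
                         - (if w = y \<and> a = inv\<^bsub>G\<^esub> y \<otimes>\<^bsub>G\<^esub> x then 1 else 0))"

lemma arc_flow_swap: "arc_flow G y x = - arc_flow G x y"
  by (simp add: arc_flow_def fun_eq_iff)

fun path_flow :: "('a, 'b) monoid_scheme \<Rightarrow> 'a list \<Rightarrow> 'a \<Rightarrow> 'a \<Rightarrow> int" where
  "path_flow G (x # y # ys) = arc_flow G x y + path_flow G (y # ys)"
| "path_flow G _ = 0"

lemma path_flow_append: "path_flow G (xs @ y # ys) = path_flow G (xs @ [y]) + path_flow G (y # ys)"
  by (induction xs rule: induct_list012) (simp_all add: add.assoc)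

lemma path_flow_rev: "path_flow G (rev xs) = - path_flow G xs"
proof (induction xs rule: induct_list012)
  case (3 x y ys)
  have "path_flow G (rev (x # y # ys)) = path_flow G (rev (y # ys)) + arc_flow G y x"
    using path_flow_append[of G "rev ys" y "[x]"] by simp
  also have "\<dots> = - (arc_flow G x y + path_flow G (y # ys))"
    by (simp only: "3.IH"(2) arc_flow_swap[of G y x] minus_add)
  finally show ?case by (simp only: path_flow.simps)
qed simp_all

fun walk_path :: "('a, 'b) monoid_scheme \<Rightarrow> 'a \<Rightarrow> 'a list \<Rightarrow> 'a list" where
  "walk_path G v [] = [v]"
| "walk_path G v (a # ts) = v # walk_path G (v \<otimes>\<^bsub>G\<^esub> a) ts"

lemma walk_path_eq_map_walk_vert:
  "walk_path G v ts = map (walk_vert G v ts) [0..<Suc (length ts)]"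
proof (induction ts arbitrary: v)
  case (Cons a ts)
  have "[0..<Suc (length (a # ts))] = 0 # map Suc [0..<Suc (length ts)]"
    by (simp add: map_Suc_upt upt_conv_Cons del: upt_Suc)
  with Cons show ?case by (simp add: walk_vert_def)
qed (simp add: walk_vert_def)

fun path_word :: "('a, 'b) monoid_scheme \<Rightarrow> 'a list \<Rightarrow> 'a list" where
  "path_word G (x # y # ys) = (inv\<^bsub>G\<^esub> x \<otimes>\<^bsub>G\<^esub> y) # path_word G (y # ys)"
| "path_word G _ = []"

definition ham_vertex_cycle :: "('a, 'b) monoid_scheme \<Rightarrow> 'a set \<Rightarrow> 'a list \<Rightarrow> bool" where
  "ham_vertex_cycle G S vs \<longleftrightarrow> distinct vs \<and> set vs = carrier G \<and> 3 \<le> length vs \<and>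
     successively (cay_adj G S) (vs @ [hd vs])"

lemma successively_rotate:
  assumes "\<forall>j<length vs. P (vs ! j) (vs ! (Suc j mod length vs))"
  shows "successively P (rotate k vs)"
  unfolding successively_conv_nth
proof (intro allI impI)
  fix j assume j: "Suc j < length (rotate k vs)"
  then have "vs \<noteq> []" by auto
  then have "(k + j) mod length vs < length vs" by simp
  then have "P (vs ! ((k + j) mod length vs)) (vs ! (Suc ((k + j) mod length vs) mod length vs))"
    using assms by blast
  then have "P (vs ! ((k + j) mod length vs)) (vs ! ((k + Suc j) mod length vs))"
    by (simp add: mod_Suc_eq)
  then show "P (rotate k vs ! j) (rotate k vs ! Suc j)"
    using j by (simp add: nth_rotate)
qed

context group
begin

lemma walk_flow_Cons:
  assumes "v \<in> carrier G" "a \<in> carrier G"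
  shows "walk_flow G v (a # ts) = arc_flow G v (v \<otimes> a) + walk_flow G (v \<otimes> a) ts"
proof -
  have "inv v \<otimes> (v \<otimes> a) = a" "inv (v \<otimes> a) \<otimes> v = inv a"
    using assms by (simp_all add: m_assoc[symmetric]) (simp add: inv_mult_group m_assoc)
  then show ?thesis
    unfolding walk_flow_def arc_flow_def
    by (simp add: fun_eq_iff sum.lessThan_Suc_shift walk_vert_def del: sum.lessThan_Suc)
qed

lemma walk_flow_eq_path_flow:
  "v \<in> carrier G \<Longrightarrow> set ts \<subseteq> carrier G \<Longrightarrow> walk_flow G v ts = path_flow G (walk_path G v ts)"
proof (induction ts arbitrary: v)
  case Nil
  then show ?case by (simp add: walk_flow_def fun_eq_iff)
next
  case (Cons a ts)
  then have "a \<in> carrier G" "v \<otimes> a \<in> carrier G" "set ts \<subseteq> carrier G" by auto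
  moreover have "walk_path G (v \<otimes> a) ts = (v \<otimes> a) # tl (walk_path G (v \<otimes> a) ts)"
    by (cases ts) simp_all
  ultimately show ?case
    using Cons.IH Cons.prems(1) walk_flow_Cons by (metis path_flow.simps(1) walk_path.simps(2))
qed

lemma walk_path_path_word:
  "set xs \<subseteq> carrier G \<Longrightarrow> xs \<noteq> [] \<Longrightarrow> walk_path G (hd xs) (path_word G xs) = xs"
  by (induction xs rule: induct_list012) (simp_all add: m_assoc[symmetric])

lemma set_path_word_subset:
  "S \<subseteq> carrier G \<Longrightarrow> successively (cay_adj G S) xs \<Longrightarrow> set (path_word G xs) \<subseteq> S"
proof (induction xs rule: induct_list012)
  case (3 x y ys)
  then obtain a where a: "x \<in> carrier G" "a \<in> S" "y = x \<otimes> a"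
    by (auto simp: cay_adj_def)
  with "3.prems"(1) have "inv x \<otimes> y = a"
    by (auto simp: m_assoc[symmetric])
  with 3 a(2) show ?case by simp
qed simp_all

lemma ham_cycle_walk_path:
  assumes "v \<in> carrier G" "set ts \<subseteq> S" "walk_path G v ts = vs @ [v]"
    and "distinct vs" "set vs = carrier G" "3 \<le> length vs"
  shows "ham_cycle G S v ts"
proof -
  have "map (walk_vert G v ts) [0..<length ts] @ [walk_vert G v ts (length ts)] = vs @ [v]"
    using assms(3) by (simp add: walk_path_eq_map_walk_vert)
  then have verts: "map (walk_vert G v ts) [0..<length ts] = vs" and last: "walk_vert G v ts (length ts) = v"
    by simp_all
  have "length ts = length vs" "card (carrier G) = length vs"
    using arg_cong[OF verts, of length] distinct_card[OF assms(4)] assms(5) by simp_all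
  then show ?thesis
    unfolding ham_cycle_def verts last using assms(1,2,4-6) by simp
qed

lemma ham_vertex_cycle_flow_in_ham_span:
  assumes "S \<subseteq> carrier G" "ham_vertex_cycle G S vs"
  shows "path_flow G (vs @ [hd vs]) \<in> ham_span G S"
proof -
  let ?ts = "path_word G (vs @ [hd vs])"
  have vs: "distinct vs" "set vs = carrier G" "3 \<le> length vs"
    and adj: "successively (cay_adj G S) (vs @ [hd vs])"
    using assms(2) unfolding ham_vertex_cycle_def by blast+
  have "vs \<noteq> []"
    using vs(3) by auto
  then have hd: "hd vs \<in> carrier G" "hd (vs @ [hd vs]) = hd vs"
    using vs(2) hd_in_set by auto
  have word: "set ?ts \<subseteq> S"
    by (rule set_path_word_subset[OF assms(1) adj])
  have walk: "walk_path G (hd vs) ?ts = vs @ [hd vs]"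
    using walk_path_path_word[of "vs @ [hd vs]"] vs(2) hd by simp
  have "walk_flow G (hd vs) ?ts \<in> ham_span G S"
    by (rule ham_span.ham, rule ham_cycle_walk_path[OF hd(1) word walk vs])
  moreover have "walk_flow G (hd vs) ?ts = path_flow G (vs @ [hd vs])"
    using walk_flow_eq_path_flow[OF hd(1)] word assms(1) walk by simp
  ultimately show ?thesis
    by simp
qed

lemma cay_adjI: "x \<in> carrier G \<Longrightarrow> a \<in> S \<Longrightarrow> x \<otimes> a = y \<Longrightarrow> cay_adj G S x y"
  unfolding cay_adj_def by blast

lemma cay_adj_translate:
  assumes "S \<subseteq> carrier G" "g \<in> carrier G" "cay_adj G S x y"
  shows "cay_adj G S (g \<otimes> x) (g \<otimes> y)"
proof -
  obtain a where a: "x \<in> carrier G" "a \<in> S" "y = x \<otimes> a"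
    using assms(3) unfolding cay_adj_def by blast
  then have "g \<otimes> y = g \<otimes> x \<otimes> a"
    using assms(1,2) by (auto simp: m_assoc)
  then show ?thesis
    using a(1,2) assms(2) unfolding cay_adj_def by blast
qed

lemma cay_adj_sym:
  assumes "S \<subseteq> carrier G" "\<And>a. a \<in> S \<Longrightarrow> inv a \<in> S" "cay_adj G S x y"
  shows "cay_adj G S y x"
proof -
  obtain a where a: "x \<in> carrier G" "a \<in> S" "y = x \<otimes> a"
    using assms(3) unfolding cay_adj_def by blast
  have "a \<in> carrier G"
    using a(2) assms(1) by blast
  with a(1) have "x = x \<otimes> a \<otimes> inv a"
    by (simp add: m_assoc)
  with a have "y \<in> carrier G" "x = y \<otimes> inv a"
    using \<open>a \<in> carrier G\<close> by simp_all
  with a(2) assms(2) show ?thesis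
    unfolding cay_adj_def by blast
qed

lemma ham_vertex_cycle_translate:
  assumes "S \<subseteq> carrier G" "g \<in> carrier G" "ham_vertex_cycle G S vs"
  shows "ham_vertex_cycle G S (map ((\<otimes>) g) vs)"
proof -
  have vs: "distinct vs" "set vs = carrier G" "3 \<le> length vs"
    and adj: "successively (cay_adj G S) (vs @ [hd vs])"
    using assms(3) unfolding ham_vertex_cycle_def by auto
  have "map ((\<otimes>) g) vs @ [hd (map ((\<otimes>) g) vs)] = map ((\<otimes>) g) (vs @ [hd vs])"
    using vs(3) by (cases vs) auto
  moreover have "successively (cay_adj G S) (map ((\<otimes>) g) (vs @ [hd vs]))"
    unfolding successively_map
    using adj by (rule successively_mono) (rule cay_adj_translate[OF assms(1,2)])
  moreover have "distinct (map ((\<otimes>) g) vs)"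
    using vs inj_on_cmult[OF assms(2)] by (simp add: distinct_map)
  ultimately show ?thesis
    using vs surj_const_mult[OF assms(2)] unfolding ham_vertex_cycle_def by simp
qed

lemma induced_ham_cycle_with_edge_path:
  assumes "S \<subseteq> carrier G" "\<And>a. a \<in> S \<Longrightarrow> inv a \<in> S" "V \<subseteq> carrier G" "x \<noteq> y"
    and "induced_ham_cycle_with_edge G S V x y"
  obtains ws where "distinct ws" "set ws = V" "ws \<noteq> []" "successively (cay_adj G S) ws"
    "hd ws = y" "last ws = x"
proof -
  obtain vs i where vs: "distinct vs" "set vs = V" "3 \<le> length vs"
    "\<forall>j<length vs. cay_adj G S (vs ! j) (vs ! (Suc j mod length vs))"
    and i: "i < length vs" "{vs ! i, vs ! (Suc i mod length vs)} = {x, y}"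
    using assms(5) unfolding induced_ham_cycle_with_edge_def by blast
  define r where "r = rotate (Suc i) vs"
  have r: "distinct r" "set r = V" "r \<noteq> []" "successively (cay_adj G S) r"
    using vs successively_rotate[OF vs(4)] by (simp_all add: r_def del: rotate_Suc) auto
  have "vs \<noteq> []" using vs(3) by auto
  then have hd_r: "hd r = vs ! (Suc i mod length vs)"
    by (simp add: r_def hd_rotate_conv_nth del: rotate_Suc)
  have last_r: "last r = vs ! i"
  proof -
    have "last (rotate1 zs) = hd zs" if "zs \<noteq> []" for zs :: "'a list"
      using that by (cases zs) simp_all
    then show ?thesis
      using \<open>vs \<noteq> []\<close> i(1) by (simp add: r_def hd_rotate_conv_nth)
  qed
  have rev_r: "successively (\<lambda>a b. cay_adj G S b a) r"
    using r(4) by (rule successively_mono) (rule cay_adj_sym[OF assms(1,2)])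
  consider (forward) "vs ! i = x" "vs ! (Suc i mod length vs) = y"
    | (backward) "vs ! i = y" "vs ! (Suc i mod length vs) = x"
    using i(2) assms(4) by (auto simp: doubleton_eq_iff)
  then show ?thesis
  proof cases
    case forward
    with r hd_r last_r show ?thesis by (intro that[of r]) simp_all
  next
    case backward
    with r hd_r last_r rev_r show ?thesis by (intro that[of "rev r"]) (simp_all add: hd_rev last_rev)
  qed
qed

end

context comm_group
begin

lemma basic_square_flow:
  assumes "x \<in> carrier G" "a \<in> carrier G" "b \<in> carrier G"
  shows "walk_flow G x [a, b, inv a, inv b] = path_flow G [x, x \<otimes> a, x \<otimes> a \<otimes> b, x \<otimes> b, x]"
proof -
  have "x \<otimes> a \<otimes> b \<otimes> inv a = x \<otimes> b"
    using assms by (intro inv_solve_right'[THEN iffD2]) (simp_all add: m_ac)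
  moreover have "x \<otimes> b \<otimes> inv b = x"
    using assms by (simp add: m_assoc)
  ultimately show ?thesis
    using assms by (simp add: walk_flow_eq_path_flow)
qed

lemma basic_square_flow_swap:
  assumes "x \<in> carrier G" "a \<in> carrier G" "b \<in> carrier G"
  shows "walk_flow G x [b, a, inv b, inv a] = - walk_flow G x [a, b, inv a, inv b]"
proof -
  have comm: "x \<otimes> b \<otimes> a = x \<otimes> a \<otimes> b"
    using assms by (simp add: m_ac)
  have "walk_flow G x [b, a, inv b, inv a] = path_flow G [x, x \<otimes> b, x \<otimes> b \<otimes> a, x \<otimes> a, x]"
    by (rule basic_square_flow[OF assms(1,3,2)])
  also have "\<dots> = path_flow G (rev [x, x \<otimes> a, x \<otimes> a \<otimes> b, x \<otimes> b, x])"
    by (simp only: comm rev.simps append.simps)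
  also have "\<dots> = - walk_flow G x [a, b, inv a, inv b]"
    using assms by (simp only: path_flow_rev basic_square_flow)
  finally show ?thesis .
qed

lemma basic_square_flow_self:
  assumes "x \<in> carrier G" "a \<in> carrier G"
  shows "walk_flow G x [a, a, inv a, inv a] = 0"
  using basic_square_flow_swap[OF assms assms(2)] by (simp add: fun_eq_iff)

lemma basic_square_flow_inv:
  assumes "y \<in> carrier G" "a \<in> carrier G" "b \<in> carrier G"
  shows "walk_flow G (y \<otimes> a) [inv a, b, a, inv b] = - walk_flow G y [a, b, inv a, inv b]"
proof -
  have "walk_flow G (y \<otimes> a) [inv a, b, a, inv b]
      = path_flow G [y \<otimes> a, y, y \<otimes> b, y \<otimes> a \<otimes> b, y \<otimes> a]"
    using basic_square_flow[of "y \<otimes> a" "inv a" b] assms by (simp add: m_assoc m_lcomm[of b])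
  also have "\<dots> = path_flow G [y, y \<otimes> b, y \<otimes> a \<otimes> b, y \<otimes> a, y]"
    by (simp only: path_flow.simps add_ac)
  also have "\<dots> = path_flow G (rev [y, y \<otimes> a, y \<otimes> a \<otimes> b, y \<otimes> b, y])"
    by (simp only: rev.simps append.simps)
  also have "\<dots> = - walk_flow G y [a, b, inv a, inv b]"
    using assms by (simp only: path_flow_rev basic_square_flow)
  finally show ?thesis .
qed

lemma basic_square_in_ham_span_if_generators:
  assumes T: "T \<subseteq> carrier G"
    and gen: "\<And>x p q. x \<in> carrier G \<Longrightarrow> p \<in> T \<Longrightarrow> q \<in> T \<Longrightarrow>
                walk_flow G x [p, q, inv p, inv q] \<in> ham_span G S"
    and a: "a \<in> T \<union> (\<lambda>p. inv p) ` T" and b: "b \<in> T \<union> (\<lambda>p. inv p) ` T"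
    and x: "x \<in> carrier G"
  shows "walk_flow G x [a, b, inv a, inv b] \<in> ham_span G S"
proof -
  have ac: "a \<in> carrier G" using a T by auto
  have second_generator: "walk_flow G y [a, q, inv a, inv q] \<in> ham_span G S"
    if y: "y \<in> carrier G" and q: "q \<in> T" for y q
  proof (cases "a \<in> T")
    case False
    then obtain p where p: "p \<in> T" "a = inv p" using a by blast
    have pq: "p \<in> carrier G" "q \<in> carrier G" using p(1) q T by auto
    have square:
      "walk_flow G y [a, q, inv a, inv q] = - walk_flow G (y \<otimes> inv p) [p, q, inv p, inv q]"
      using basic_square_flow_inv[of "y \<otimes> inv p" p q] pq y p(2) by (simp add: m_assoc)
    show ?thesis
      unfolding square using pq p(1) q y by (intro ham_span_uminus gen) simp_all
  qed (use gen y q in blast)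
  show ?thesis
  proof (cases "b \<in> T")
    case False
    then obtain q where q: "q \<in> T" "b = inv q" using b by blast
    have qc: "q \<in> carrier G" "x \<otimes> inv q \<in> carrier G" using q(1) T x by auto
    have "walk_flow G x [a, b, inv a, inv b] = - walk_flow G x [inv q, a, q, inv a]"
      using basic_square_flow_swap[of x a "inv q"] q(2) qc ac x by simp
    also have "\<dots> = walk_flow G (x \<otimes> inv q) [q, a, inv q, inv a]"
      using basic_square_flow_inv[of "x \<otimes> inv q" q a] qc ac x by (simp add: m_assoc)
    also have "\<dots> = - walk_flow G (x \<otimes> inv q) [a, q, inv a, inv q]"
      using basic_square_flow_swap[of "x \<otimes> inv q" a q] qc ac by simp
    finally show ?thesis
      using second_generator[OF qc(2) q(1)] by (simp add: ham_span_uminus)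
  qed (use second_generator x in blast)
qed

end

fun lattice_succ :: "nat \<times> nat \<times> nat \<Rightarrow> nat \<times> nat \<times> nat \<Rightarrow> bool" where
  "lattice_succ (i, j, k) d \<longleftrightarrow> d \<in> {(Suc i, j, k), (i, Suc j, k), (i, j, Suc k)}"

definition lattice_adj :: "nat \<times> nat \<times> nat \<Rightarrow> nat \<times> nat \<times> nat \<Rightarrow> bool" where
  "lattice_adj c d \<longleftrightarrow> lattice_succ c d \<or> lattice_succ d c"

definition grid_box :: "(nat \<times> nat \<times> nat) set" where
  "grid_box = {0..2} \<times> {0..2} \<times> {0..1}"

(* (0, 2, 0) and (1, 2, 0) are t^2 and s t^2, the grid points next to t^3 and t^3 s. *)
definition grid_ham_path :: "(nat \<times> nat \<times> nat) list \<Rightarrow> bool" where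
  "grid_ham_path L \<longleftrightarrow> distinct L \<and> set L = grid_box \<and> successively lattice_adj L \<and>
     hd L = (0, 2, 0) \<and> last L = (1, 2, 0)"

lemma card_grid_box: "card grid_box = 18"
  by (simp add: grid_box_def card_cartesian_product)

lemma grid_ham_pathI:
  assumes "distinct L" "length L = 18" "set L \<subseteq> grid_box" "successively lattice_adj L"
    "hd L = (0, 2, 0)" "last L = (1, 2, 0)"
  shows "grid_ham_path L"
proof -
  have "finite grid_box" "card (set L) = card grid_box"
    using assms(1,2) by (simp_all add: grid_box_def distinct_card card_cartesian_product)
  then have "set L = grid_box"
    using assms(3) card_subset_eq by blast
  then show ?thesis
    using assms unfolding grid_ham_path_def by blast
qed

locale grid_generators = comm_group G for G (structure) +
  fixes s t u :: 'a
  assumes s_closed [simp]: "s \<in> carrier G"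
    and t_closed [simp]: "t \<in> carrier G"
    and u_closed [simp]: "u \<in> carrier G"
begin

definition grid_point :: "nat \<times> nat \<times> nat \<Rightarrow> 'a" where
  "grid_point = (\<lambda>(i, j, k). s [^] i \<otimes> t [^] j \<otimes> u [^] k)"

lemma grid_point_closed [simp]: "grid_point c \<in> carrier G"
  by (simp add: grid_point_def split: prod.split)

lemma grid_point_mult_s: "grid_point (i, j, k) \<otimes> s = grid_point (Suc i, j, k)"
  by (simp add: grid_point_def nat_pow_Suc m_ac)

lemma grid_point_mult_t: "grid_point (i, j, k) \<otimes> t = grid_point (i, Suc j, k)"
  by (simp add: grid_point_def nat_pow_Suc m_ac)

lemma grid_point_mult_u: "grid_point (i, j, k) \<otimes> u = grid_point (i, j, Suc k)"
  by (simp add: grid_point_def nat_pow_Suc m_ac)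

lemma translated_grid_point_mult:
  assumes "g \<in> carrier G"
  shows "g \<otimes> grid_point (i, j, k) \<otimes> s = g \<otimes> grid_point (Suc i, j, k)"
    and "g \<otimes> grid_point (i, j, k) \<otimes> t = g \<otimes> grid_point (i, Suc j, k)"
    and "g \<otimes> grid_point (i, j, k) \<otimes> u = g \<otimes> grid_point (i, j, Suc k)"
  using assms by (simp_all add: m_assoc grid_point_mult_s grid_point_mult_t grid_point_mult_u)

lemma cay_adj_grid_point:
  assumes "lattice_adj c d"
  shows "cay_adj G {s, inv s, t, inv t, u, inv u} (grid_point c) (grid_point d)"
proof -
  let ?S = "{s, inv s, t, inv t, u, inv u}"
  have succ: "cay_adj G ?S (grid_point c) (grid_point d)" if "lattice_succ c d" for c d
  proof -
    obtain i j k where c: "c = (i, j, k)"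
      by (cases c)
    with that consider "d = (Suc i, j, k)" | "d = (i, Suc j, k)" | "d = (i, j, Suc k)"
      by auto
    then show ?thesis
    proof cases
      case 1
      then show ?thesis
        unfolding c by (intro cay_adjI[where a = s]) (simp_all add: grid_point_mult_s)
    next
      case 2
      then show ?thesis
        unfolding c by (intro cay_adjI[where a = t]) (simp_all add: grid_point_mult_t)
    next
      case 3
      then show ?thesis
        unfolding c by (intro cay_adjI[where a = u]) (simp_all add: grid_point_mult_u)
    qed
  qed
  have S: "?S \<subseteq> carrier G" "\<And>a. a \<in> ?S \<Longrightarrow> inv a \<in> ?S"
    by auto
  show ?thesis
  proof (cases "lattice_succ c d")
    case False
    then have "lattice_succ d c"
      using assms unfolding lattice_adj_def by blast
    then have "cay_adj G ?S (grid_point d) (grid_point c)"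
      by (rule succ)
    then show ?thesis
      using cay_adj_sym[of ?S "grid_point d" "grid_point c"] S by blast
  qed (rule succ)
qed

(* Orienting every grid edge upwards turns the flows of grid paths into signed sums of
   atoms, on which the simplifier can verify the four-path identities below. *)
lemma arc_flow_grid_downward:
  "i' + j' + k' < i + j + k \<Longrightarrow>
   arc_flow G (g \<otimes> grid_point (i, j, k)) (g \<otimes> grid_point (i', j', k'))
     = - arc_flow G (g \<otimes> grid_point (i', j', k')) (g \<otimes> grid_point (i, j, k))"
  by (rule arc_flow_swap)

lemma grid_ham_path_image:
  assumes "inj_on grid_point grid_box" "grid_ham_path L"
  shows "distinct (map grid_point L)" "set (map grid_point L) = grid_point ` grid_box"
    "18 \<le> length (map grid_point L)"
    "successively (cay_adj G {s, inv s, t, inv t, u, inv u}) (map grid_point L)"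
    "hd (map grid_point L) = grid_point (0, 2, 0)" "last (map grid_point L) = grid_point (1, 2, 0)"
proof -
  have L: "distinct L" "set L = grid_box" "successively lattice_adj L" "hd L = (0, 2, 0)"
    "last L = (1, 2, 0)"
    using assms(2) unfolding grid_ham_path_def by blast+
  have "length L = 18"
    using distinct_card[OF L(1)] L(2) card_grid_box by simp
  then have "L \<noteq> []"
    by auto
  show "distinct (map grid_point L)"
    using L(1,2) assms(1) by (simp add: distinct_map)
  show "set (map grid_point L) = grid_point ` grid_box" "18 \<le> length (map grid_point L)"
    using L(2) \<open>length L = 18\<close> by simp_all
  show "successively (cay_adj G {s, inv s, t, inv t, u, inv u}) (map grid_point L)"
    unfolding successively_map using L(3) by (rule successively_mono) (erule cay_adj_grid_point)
  show "hd (map grid_point L) = grid_point (0, 2, 0)" "last (map grid_point L) = grid_point (1, 2, 0)"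
    using \<open>L \<noteq> []\<close> L(4,5) by (simp_all add: hd_map last_map)
qed

lemma grid_ham_paths_close:
  assumes S: "S = {s, inv s, t, inv t, u, inv u}"
    and inj: "inj_on grid_point grid_box"
    and outside: "carrier G = grid_point ` grid_box \<or>
      induced_ham_cycle_with_edge G S (carrier G - grid_point ` grid_box)
        (t [^] (3::nat)) (t [^] (3::nat) \<otimes> s)"
  obtains R where "\<And>L. grid_ham_path L \<Longrightarrow> ham_vertex_cycle G S (map grid_point L @ R)"
proof -
  note path = grid_ham_path_image[OF inj, folded S]
  note edge = cay_adj_grid_point[folded S]
  show ?thesis
  proof (cases "carrier G = grid_point ` grid_box")
    case True
    have closing_edge: "cay_adj G S (grid_point (1, 2, 0)) (grid_point (0, 2, 0))"
      by (rule edge) (simp add: lattice_adj_def)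
    have "ham_vertex_cycle G S (map grid_point L)" if "grid_ham_path L" for L
      using path[OF that] True closing_edge
      unfolding ham_vertex_cycle_def by (simp add: successively_append_iff)
    then show ?thesis
      using that[of "[]"] by simp
  next
    case False
    have S_closed: "S \<subseteq> carrier G" and S_inv: "\<And>a. a \<in> S \<Longrightarrow> inv a \<in> S"
      using S by auto
    have t3: "t [^] (3::nat) = grid_point (0, 3, 0)" "t [^] (3::nat) \<otimes> s = grid_point (1, 3, 0)"
      by (simp_all add: grid_point_def m_comm)
    have "grid_point (1, 0, 0) \<noteq> grid_point (0, 0, 0)"
      using inj_onD[OF inj, of "(1, 0, 0)" "(0, 0, 0)"] by (auto simp: grid_box_def)
    then have "t [^] (3::nat) \<noteq> t [^] (3::nat) \<otimes> s"
      by (simp add: grid_point_def)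
    then obtain ws where ws: "distinct ws" "set ws = carrier G - grid_point ` grid_box" "ws \<noteq> []"
      "successively (cay_adj G S) ws" "hd ws = grid_point (1, 3, 0)" "last ws = grid_point (0, 3, 0)"
      using induced_ham_cycle_with_edge_path[OF S_closed S_inv] False outside t3
      by (metis Diff_subset)
    have exit_edge: "cay_adj G S (grid_point (1, 2, 0)) (grid_point (1, 3, 0))"
      and entry_edge: "cay_adj G S (grid_point (0, 3, 0)) (grid_point (0, 2, 0))"
      by (rule edge, simp add: lattice_adj_def)+
    have Y_closed: "grid_point ` grid_box \<subseteq> carrier G"
      by auto
    have "ham_vertex_cycle G S (map grid_point L @ ws)" if "grid_ham_path L" for L
    proof -
      note P = path[OF that]
      have "map grid_point L \<noteq> []"
        using P(3) by auto
      then show ?thesis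
        using P ws exit_edge entry_edge Y_closed
        unfolding ham_vertex_cycle_def by (auto simp: successively_append_iff)
    qed
    then show ?thesis
      using that by blast
  qed
qed

end

locale closable_grid = grid_generators +
  fixes S :: "'a set" and R :: "'a list"
  assumes S_closed: "S \<subseteq> carrier G"
    and closes: "\<And>L. grid_ham_path L \<Longrightarrow> ham_vertex_cycle G S (map grid_point L @ R)"
begin

definition closing_flow :: "'a \<Rightarrow> 'a \<Rightarrow> 'a \<Rightarrow> int" where
  "closing_flow g =
     path_flow G (g \<otimes> grid_point (1, 2, 0) # map ((\<otimes>) g) R @ [g \<otimes> grid_point (0, 2, 0)])"

lemma grid_path_flow_plus_closing_in_ham_span:
  assumes "grid_ham_path L" "g \<in> carrier G"
  shows "path_flow G (map (\<lambda>c. g \<otimes> grid_point c) L) + closing_flow g \<in> ham_span G S"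
proof -
  let ?vs = "map ((\<otimes>) g) (map grid_point L @ R)"
  define M where "M = butlast L"
  have "(0, 2, 0) \<in> grid_box"
    by (simp add: grid_box_def)
  then have L: "L \<noteq> []" "hd L = (0, 2, 0)" "last L = (1, 2, 0)"
    using assms(1) unfolding grid_ham_path_def by auto
  then have split: "L = M @ [(1, 2, 0)]"
    using append_butlast_last_id[OF L(1)] by (simp add: M_def)
  have "hd ?vs = g \<otimes> grid_point (0, 2, 0)"
    using L(1,2) by (simp add: hd_map)
  then have cycle: "?vs @ [hd ?vs] = map (\<lambda>c. g \<otimes> grid_point c) M
      @ g \<otimes> grid_point (1, 2, 0) # map ((\<otimes>) g) R @ [g \<otimes> grid_point (0, 2, 0)]"
    by (simp add: split)
  have "path_flow G (?vs @ [hd ?vs]) = path_flow G (map (\<lambda>c. g \<otimes> grid_point c) L) + closing_flow g"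
    unfolding cycle by (subst path_flow_append) (simp add: split closing_flow_def)
  moreover have "path_flow G (?vs @ [hd ?vs]) \<in> ham_span G S"
    using ham_vertex_cycle_flow_in_ham_span[OF S_closed]
      ham_vertex_cycle_translate[OF S_closed assms(2) closes[OF assms(1)]] by blast
  ultimately show ?thesis
    by simp
qed

lemma basic_square_in_ham_span_if_grid_identity:
  assumes "grid_ham_path P" "grid_ham_path Q" "grid_ham_path P'" "grid_ham_path Q'"
    and identity: "\<And>g. g \<in> carrier G \<Longrightarrow>
      path_flow G (map (\<lambda>c. g \<otimes> grid_point c) P) - path_flow G (map (\<lambda>c. g \<otimes> grid_point c) Q)
      + path_flow G (map (\<lambda>c. g \<otimes> grid_point c) P') - path_flow G (map (\<lambda>c. g \<otimes> grid_point c) Q')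
      = walk_flow G (g \<otimes> grid_point c) [a, b, inv a, inv b]"
    and "x \<in> carrier G"
  shows "walk_flow G x [a, b, inv a, inv b] \<in> ham_span G S"
proof -
  define g where "g = x \<otimes> inv (grid_point c)"
  have g: "g \<in> carrier G" "g \<otimes> grid_point c = x"
    using assms(6) by (simp_all add: g_def m_assoc)
  define f where "f L = path_flow G (map (\<lambda>c. g \<otimes> grid_point c) L) + closing_flow g" for L
  have "f P - f Q + f P' - f Q'
      = path_flow G (map (\<lambda>c. g \<otimes> grid_point c) P) - path_flow G (map (\<lambda>c. g \<otimes> grid_point c) Q)
      + path_flow G (map (\<lambda>c. g \<otimes> grid_point c) P') - path_flow G (map (\<lambda>c. g \<otimes> grid_point c) Q')"
    by (simp add: f_def algebra_simps)
  then have "walk_flow G x [a, b, inv a, inv b] = f P - f Q + f P' - f Q'"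
    using identity[OF g(1)] g(2) by simp
  moreover have "f L \<in> ham_span G S" if "grid_ham_path L" for L
    using grid_path_flow_plus_closing_in_ham_span[OF that g(1)] by (simp add: f_def)
  ultimately show ?thesis
    using assms(1-4) by (simp add: ham_span_add ham_span_diff)
qed

lemma basic_square_s_t_in_ham_span:
  "x \<in> carrier G \<Longrightarrow> walk_flow G x [s, t, inv s, inv t] \<in> ham_span G S"
  by (rule basic_square_in_ham_span_if_grid_identity[where c = "(0, 0, 0)"
    and P = "[(0,2,0), (0,1,0), (1,1,0), (1,1,1), (0,1,1), (0,2,1), (1,2,1), (2,2,1), (2,1,1),
               (2,0,1), (1,0,1), (0,0,1), (0,0,0), (1,0,0), (2,0,0), (2,1,0), (2,2,0), (1,2,0)]"
    and Q = "[(0,2,0), (0,1,0), (0,0,0), (0,0,1), (0,1,1), (0,2,1), (1,2,1), (2,2,1), (2,1,1),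
               (2,0,1), (1,0,1), (1,1,1), (1,1,0), (1,0,0), (2,0,0), (2,1,0), (2,2,0), (1,2,0)]"
    and P' = "[(0,2,0), (0,2,1), (0,1,1), (1,1,1), (1,1,0), (0,1,0), (0,0,0), (0,0,1), (1,0,1),
               (1,0,0), (2,0,0), (2,0,1), (2,1,1), (2,1,0), (2,2,0), (2,2,1), (1,2,1), (1,2,0)]"
    and Q' = "[(0,2,0), (0,2,1), (0,1,1), (0,0,1), (0,0,0), (0,1,0), (1,1,0), (1,1,1), (1,0,1),
               (1,0,0), (2,0,0), (2,0,1), (2,1,1), (2,1,0), (2,2,0), (2,2,1), (1,2,1), (1,2,0)]"],
    (rule grid_ham_pathI; simp add: grid_box_def lattice_adj_def)+)
   (simp add: basic_square_flow translated_grid_point_mult arc_flow_grid_downward algebra_simps)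

lemma basic_square_s_u_in_ham_span:
  "x \<in> carrier G \<Longrightarrow> walk_flow G x [s, u, inv s, inv u] \<in> ham_span G S"
  by (rule basic_square_in_ham_span_if_grid_identity[where c = "(0, 0, 0)"
    and P = "[(0,2,0), (0,1,0), (0,0,0), (1,0,0), (1,0,1), (0,0,1), (0,1,1), (0,2,1), (1,2,1),
              (1,1,1), (1,1,0), (2,1,0), (2,0,0), (2,0,1), (2,1,1), (2,2,1), (2,2,0), (1,2,0)]"
    and Q = "[(0,2,0), (0,1,0), (1,1,0), (2,1,0), (2,1,1), (1,1,1), (1,0,1), (2,0,1), (2,0,0),
              (1,0,0), (0,0,0), (0,0,1), (0,1,1), (0,2,1), (1,2,1), (2,2,1), (2,2,0), (1,2,0)]"
    and P' = "[(0,2,0), (0,2,1), (0,1,1), (0,1,0), (1,1,0), (1,0,0), (0,0,0), (0,0,1), (1,0,1),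
               (2,0,1), (2,0,0), (2,1,0), (2,2,0), (2,2,1), (2,1,1), (1,1,1), (1,2,1), (1,2,0)]"
    and Q' = "[(0,2,0), (0,2,1), (0,1,1), (0,1,0), (0,0,0), (0,0,1), (1,0,1), (1,1,1), (1,1,0),
               (1,0,0), (2,0,0), (2,0,1), (2,1,1), (2,1,0), (2,2,0), (2,2,1), (1,2,1), (1,2,0)]"],
    (rule grid_ham_pathI; simp add: grid_box_def lattice_adj_def)+)
   (simp add: basic_square_flow translated_grid_point_mult arc_flow_grid_downward algebra_simps)

lemma basic_square_t_u_in_ham_span:
  "x \<in> carrier G \<Longrightarrow> walk_flow G x [t, u, inv t, inv u] \<in> ham_span G S"
  by (rule basic_square_in_ham_span_if_grid_identity[where c = "(1, 0, 0)"
    and P = "[(0,2,0), (0,1,0), (0,0,0), (0,0,1), (1,0,1), (1,0,0), (2,0,0), (2,0,1), (2,1,1),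
              (1,1,1), (0,1,1), (0,2,1), (1,2,1), (2,2,1), (2,2,0), (2,1,0), (1,1,0), (1,2,0)]"
    and Q = "[(0,2,0), (0,1,0), (0,0,0), (0,0,1), (1,0,1), (1,1,1), (0,1,1), (0,2,1), (1,2,1),
              (2,2,1), (2,2,0), (2,1,0), (2,1,1), (2,0,1), (2,0,0), (1,0,0), (1,1,0), (1,2,0)]"
    and P' = "[(0,2,0), (0,2,1), (0,1,1), (0,1,0), (0,0,0), (0,0,1), (1,0,1), (1,1,1), (2,1,1),
               (2,0,1), (2,0,0), (1,0,0), (1,1,0), (2,1,0), (2,2,0), (2,2,1), (1,2,1), (1,2,0)]"
    and Q' = "[(0,2,0), (0,2,1), (0,1,1), (0,1,0), (0,0,0), (0,0,1), (1,0,1), (1,1,1), (1,1,0),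
               (1,0,0), (2,0,0), (2,0,1), (2,1,1), (2,1,0), (2,2,0), (2,2,1), (1,2,1), (1,2,0)]"],
    (rule grid_ham_pathI; simp add: grid_box_def lattice_adj_def)+)
   (simp add: basic_square_flow translated_grid_point_mult arc_flow_grid_downward algebra_simps)

lemma generator_squares_in_ham_span:
  assumes x: "x \<in> carrier G" and "p \<in> {s, t, u}" "q \<in> {s, t, u}"
  shows "walk_flow G x [p, q, inv p, inv q] \<in> ham_span G S"
proof -
  have swap: "walk_flow G x [b, a, inv b, inv a] \<in> ham_span G S"
    if "walk_flow G x [a, b, inv a, inv b] \<in> ham_span G S" "a \<in> carrier G" "b \<in> carrier G" for a b
    using ham_span_uminus[OF that(1)] basic_square_flow_swap[OF x that(2,3)] by simp
  have self: "walk_flow G x [a, a, inv a, inv a] \<in> ham_span G S" if "a \<in> carrier G" for a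
    using basic_square_flow_self[OF x that] ham_span_zero by simp
  note squares = basic_square_s_t_in_ham_span[OF x] basic_square_s_u_in_ham_span[OF x]
    basic_square_t_u_in_ham_span[OF x]
  show ?thesis
    using assms(2,3) squares swap[OF squares(1)] swap[OF squares(2)] swap[OF squares(3)]
      self[of s] self[of t] self[of u]
    by (elim insertE emptyE) simp_all
qed

end

theorem proposition10p1:
  fixes G (structure) and s t u :: 'a and S :: "'a set"
  assumes "comm_group G" and "finite (carrier G)" and "even (order G)"
    and "s \<in> carrier G" and "t \<in> carrier G" and "u \<in> carrier G"
    and "S = {s, inv s, t, inv t, u, inv u}"
    and "generate G S = carrier G"
    and "inj_on (\<lambda>(i, j, k). s [^] (i::nat) \<otimes> t [^] (j::nat) \<otimes> u [^] (k::nat))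
                ({0..2} \<times> {0..2} \<times> {0..1})"
    and "Y = (\<lambda>(i, j, k). s [^] (i::nat) \<otimes> t [^] (j::nat) \<otimes> u [^] (k::nat))
                ` ({0..2} \<times> {0..2} \<times> {0..1})"
    and "carrier G = Y \<or>
         induced_ham_cycle_with_edge G S (carrier G - Y) (t [^] (3::nat)) (t [^] (3::nat) \<otimes> s)"
  shows "\<forall>v\<in>carrier G. \<forall>a\<in>S. \<forall>b\<in>S. walk_flow G v [a, b, inv a, inv b] \<in> ham_span G S"
proof -
  interpret grid_generators G s t u
    using assms(1,4-6) by (simp add: grid_generators_def grid_generators_axioms_def)
  have "inj_on grid_point grid_box" "Y = grid_point ` grid_box"
    using assms(9,10) by (simp_all add: grid_point_def grid_box_def)
  then obtain R where "\<And>L. grid_ham_path L \<Longrightarrow> ham_vertex_cycle G S (map grid_point L @ R)"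
    using grid_ham_paths_close[OF assms(7)] assms(11) by blast
  then interpret closable_grid G s t u S R
    by unfold_locales (auto simp: assms(7))
  have "S = {s, t, u} \<union> (\<lambda>p. inv p) ` {s, t, u}"
    using assms(7) by auto
  then show ?thesis
    using basic_square_in_ham_span_if_generators[of "{s, t, u}"] generator_squares_in_ham_span
    by simp
qed

end
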